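(* Let $A\subset\mathbb T^2$ be a measurable set and $\Gamma_A:=\{\gamma\in\Gamma:\ \mathscr L^1(\{t\in[0,T]:\gamma(t)\in A\})>0\}$. Then $\mathscr L^2(A)=0$ if and only if $\eta(\Gamma_A)=0$.
   Context: $T>0$, $\mathbb T^2=\mathbb R^2/\mathbb Z^2$, $b\colon\mathbb T^2\to\mathbb R^2$ is a bounded, everywhere defined Borel vector field with $b\in\mathrm{BV}(\mathbb T^2)$, nearly incompressible with density $\rho$: $\ln\rho\in L^\infty((0,T)\times\mathbb T^2)$ and $\partial_t\rho+\mathrm{div}(\rho b)=0$ in $\mathscr D'((0,T)\times\mathbb T^2)$. $\Gamma:=C([0,T];\mathbb T^2)$, $e_t(\gamma)=\gamma(t)$. $\eta$ is a positive finite Borel measure on $\Gamma$, concentrated on curves with $\gamma(t)=\gamma(0)+\int_0^tb(\gamma(\tau))d\tau$, such that $(e_t)_\#\eta=\rho(t,\cdot)\mathscr L^2$ for every $t\in[0,T]$. *)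

theory Defs
  imports "HOL-Analysis.Analysis"
begin

text \<open>The flat torus T^2 = R^2/Z^2 is represented by its fundamental domain [0,1)^2;
  points of R^2 are projected to it by taking fractional parts.\<close>

definition torus :: "(real \<times> real) set" where
  "torus = {0..<1} \<times> {0..<1}"

definition tproj :: "real \<times> real \<Rightarrow> real \<times> real" where
  "tproj x = (frac (fst x), frac (snd x))"

definition periodic2 :: "(real \<times> real \<Rightarrow> 'b) \<Rightarrow> bool" where
  "periodic2 f \<longleftrightarrow> (\<forall>x (m::int) (n::int). f (fst x + of_int m, snd x + of_int n) = f x)"

text \<open>Standard embedding of T^2 into R^4; it induces the topology of T^2.\<close>
definition temb :: "real \<times> real \<Rightarrow> real \<times> real \<times> real \<times> real" where
  "temb x = (cos (2 * pi * fst x), sin (2 * pi * fst x), cos (2 * pi * snd x), sin (2 * pi * snd x))"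

text \<open>C-infinity: all iterated partial derivatives exist everywhere.\<close>
definition smooth :: "('a::euclidean_space \<Rightarrow> 'b::real_normed_vector) \<Rightarrow> bool" where
  "smooth f \<longleftrightarrow> (\<exists>S. f \<in> S \<and> (\<forall>g\<in>S. (\<forall>x. g differentiable (at x)) \<and>
       (\<forall>v\<in>Basis. (\<lambda>x. frechet_derivative g (at x) v) \<in> S)))"

definition div2 :: "(real \<times> real \<Rightarrow> real \<times> real) \<Rightarrow> real \<times> real \<Rightarrow> real" where
  "div2 \<phi> x = fst (frechet_derivative \<phi> (at x) (1,0)) + snd (frechet_derivative \<phi> (at x) (0,1))"

text \<open>b in BV(T^2): b in L^1(T^2) with finite total variation
  sup { sum_i int_{T^2} b_i div phi_i : phi in C^infinity(T^2; R^{2x2}), |phi| <= 1 }.\<close>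
definition BV_torus :: "(real \<times> real \<Rightarrow> real \<times> real) \<Rightarrow> bool" where
  "BV_torus b \<longleftrightarrow> set_integrable lborel torus b \<and>
     (\<exists>V::real. \<forall>\<phi>1 \<phi>2 :: real \<times> real \<Rightarrow> real \<times> real.
        smooth \<phi>1 \<and> smooth \<phi>2 \<and> periodic2 \<phi>1 \<and> periodic2 \<phi>2 \<and>
        (\<forall>x. (norm (\<phi>1 x))\<^sup>2 + (norm (\<phi>2 x))\<^sup>2 \<le> 1) \<longrightarrow>
        (\<integral>x. indicator torus x * (fst (b x) * div2 \<phi>1 x + snd (b x) * div2 \<phi>2 x) \<partial>lborel) \<le> V)"

text \<open>Test functions C_c^infinity((0,T) x T^2), as functions of (t,x) periodic in x.\<close>
definition test_fun :: "real \<Rightarrow> (real \<times> (real \<times> real) \<Rightarrow> real) \<Rightarrow> bool" where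
  "test_fun T \<phi> \<longleftrightarrow> smooth \<phi> \<and> (\<forall>t. periodic2 (\<lambda>x. \<phi> (t, x))) \<and>
     (\<exists>a c. 0 < a \<and> c < T \<and> (\<forall>t x. t \<notin> {a..c} \<longrightarrow> \<phi> (t, x) = 0))"

text \<open>Distributional continuity equation d_t rho + div (rho b) = 0 on (0,T) x T^2.\<close>
definition continuity_eq :: "real \<Rightarrow> (real \<times> real \<Rightarrow> real \<times> real) \<Rightarrow> (real \<Rightarrow> real \<times> real \<Rightarrow> real) \<Rightarrow> bool" where
  "continuity_eq T b \<rho> \<longleftrightarrow> (\<forall>\<phi>. test_fun T \<phi> \<longrightarrow>
     (\<integral>p. indicator ({0<..<T} \<times> torus) p * \<rho> (fst p) (snd p) *
        (frechet_derivative \<phi> (at p) (1, 0, 0) + frechet_derivative \<phi> (at p) (0, b (snd p))) \<partial>lborel) = 0)"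

text \<open>The curve space Gamma = C([0,T]; T^2); curves are extended by (0,0) outside [0,T].\<close>
definition Gamma :: "real \<Rightarrow> (real \<Rightarrow> real \<times> real) set" where
  "Gamma T = {\<gamma>. (\<forall>t\<in>{0..T}. \<gamma> t \<in> torus) \<and> continuous_on {0..T} (temb \<circ> \<gamma>) \<and>
                 (\<forall>t. t \<notin> {0..T} \<longrightarrow> \<gamma> t = (0, 0))}"

definition gdist :: "real \<Rightarrow> (real \<Rightarrow> real \<times> real) \<Rightarrow> (real \<Rightarrow> real \<times> real) \<Rightarrow> real" where
  "gdist T \<gamma> \<delta> = (SUP t\<in>{0..T}. dist (temb (\<gamma> t)) (temb (\<delta> t)))"

definition Gamma_open :: "real \<Rightarrow> (real \<Rightarrow> real \<times> real) set \<Rightarrow> bool" where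
  "Gamma_open T U \<longleftrightarrow> U \<subseteq> Gamma T \<and>
     (\<forall>\<gamma>\<in>U. \<exists>e>0. \<forall>\<delta>\<in>Gamma T. gdist T \<gamma> \<delta> < e \<longrightarrow> \<delta> \<in> U)"

definition Gamma_borel :: "real \<Rightarrow> (real \<Rightarrow> real \<times> real) measure" where
  "Gamma_borel T = sigma (Gamma T) {U. Gamma_open T U}"

definition Gamma_A :: "real \<Rightarrow> (real \<times> real) set \<Rightarrow> (real \<Rightarrow> real \<times> real) set" where
  "Gamma_A T A = {\<gamma> \<in> Gamma T. emeasure lborel {t \<in> {0..T}. \<gamma> t \<in> A} > 0}"

end

theory Submission
  imports Defs
begin

text \<open>Apply Fubini to the set of pairs (t, \<gamma>) with t in [0,T] and \<gamma>(t) in A. Slicing at fixed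
  \<gamma> gives the time \<gamma> spends in A, slicing at fixed t gives the measure of A under the
  marginal \<rho>(t) L^2, so \<eta>(\<Gamma>_A) = 0 iff (\<rho>(t) L^2)(A) = 0 for a.e. t in [0,T]. Since \<rho> > 0
  a.e., the latter is equivalent to L^2(A) = 0.\<close>

lemma norm_temb: "norm (temb x) = sqrt 2"
  unfolding temb_def by (simp add: norm_Pair)

lemma dist_temb_le: "dist (temb x) (temb y) \<le> 2 * sqrt 2"
  using norm_triangle_ineq4[of "temb x" "temb y"] by (simp add: dist_norm norm_temb)

text \<open>Clipping the first argument makes arccos continuous on all of the reals.\<close>
definition circle_coord :: "real \<Rightarrow> real \<Rightarrow> real" where
  "circle_coord c s =
     (if 0 \<le> s then arccos (max (-1) (min 1 c)) / (2*pi) else 1 - arccos (max (-1) (min 1 c)) / (2*pi))"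

definition temb_inv :: "real \<times> real \<times> real \<times> real \<Rightarrow> real \<times> real" where
  "temb_inv p = (case p of (a, b, c, d) \<Rightarrow> (circle_coord a b, circle_coord c d))"

lemma borel_measurable_circle_coord[measurable (raw)]:
  assumes [measurable]: "f \<in> borel_measurable M" "g \<in> borel_measurable M"
  shows "(\<lambda>x. circle_coord (f x) (g x)) \<in> borel_measurable M"
proof -
  have "(\<lambda>a::real. arccos (max (-1) (min 1 a))) \<in> borel_measurable borel"
    by (rule borel_measurable_continuous_onI) (auto intro!: continuous_intros)
  from measurable_comp[OF assms(1) this]
  have [measurable]: "(\<lambda>x. arccos (max (-1) (min 1 (f x)))) \<in> borel_measurable M"
    by (simp add: comp_def)
  show ?thesis unfolding circle_coord_def by measurable
qed

lemma borel_measurable_temb_inv[measurable]: "temb_inv \<in> borel_measurable borel"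
proof -
  have "temb_inv = (\<lambda>p. (circle_coord (fst p) (fst (snd p)), circle_coord (fst (snd (snd p))) (snd (snd (snd p)))))"
    by (auto simp: temb_inv_def split: prod.splits)
  also have "\<dots> \<in> borel_measurable borel"
    by (intro borel_measurable_Pair borel_measurable_circle_coord borel_measurable_continuous_onI
        continuous_intros)
  finally show ?thesis .
qed

lemma circle_coord_cos_sin:
  assumes "0 \<le> u" "u < 1"
  shows "circle_coord (cos (2*pi*u)) (sin (2*pi*u)) = u"
proof (cases "u \<le> 1/2")
  case True
  have "0 \<le> sin (2*pi*u)" by (rule sin_ge_zero) (use assms True in auto)
  moreover have "arccos (cos (2*pi*u)) = 2*pi*u" by (rule arccos_cos) (use assms True in auto)
  ultimately show ?thesis by (simp add: circle_coord_def)
next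
  case False
  have "sin (2*pi*u) < 0" by (rule sin_lt_zero) (use assms False in auto)
  moreover have "cos (2*pi*u) = cos (2*pi*(1-u))"
    by (metis cos_2pi_minus right_diff_distrib' mult.right_neutral)
  moreover have "arccos (cos (2*pi*(1-u))) = 2*pi*(1-u)" by (rule arccos_cos) (use assms False in auto)
  ultimately show ?thesis by (simp add: circle_coord_def)
qed

lemma temb_inv_temb: "x \<in> torus \<Longrightarrow> temb_inv (temb x) = x"
  by (cases x) (auto simp: temb_inv_def temb_def torus_def circle_coord_cos_sin)

lemma torus_sets_borel[measurable]: "torus \<in> sets borel"
  unfolding torus_def borel_prod[symmetric] by (intro pair_measureI) auto

lemma space_Gamma_borel: "space (Gamma_borel T) = Gamma T"
  unfolding Gamma_borel_def by (simp add: space_measure_of_conv)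

lemma sets_Gamma_borel: "sets (Gamma_borel T) = sigma_sets (Gamma T) {U. Gamma_open T U}"
  unfolding Gamma_borel_def by (rule sets_measure_of) (auto simp: Gamma_open_def)

lemma dist_temb_le_gdist:
  assumes "t \<in> {0..T}"
  shows "dist (temb (\<gamma> t)) (temb (\<delta> t)) \<le> gdist T \<gamma> \<delta>"
  unfolding gdist_def
  by (rule cSUP_upper[OF assms]) (auto intro!: bdd_aboveI[where M="2*sqrt 2"] dist_temb_le)

lemma measurable_temb_eval:
  assumes M: "sets M = sets (Gamma_borel T)" and t: "t \<in> {0..T}"
  shows "(\<lambda>\<gamma>. temb (\<gamma> t)) \<in> borel_measurable M"
proof (rule borel_measurableI)
  fix S :: "(real \<times> real \<times> real \<times> real) set"
  assume S: "open S"
  have "Gamma_open T ((\<lambda>\<gamma>. temb (\<gamma> t)) -` S \<inter> Gamma T)"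
    unfolding Gamma_open_def
  proof (intro conjI ballI)
    fix \<gamma> assume "\<gamma> \<in> (\<lambda>\<gamma>. temb (\<gamma> t)) -` S \<inter> Gamma T"
    then obtain e where e: "e > 0" "ball (temb (\<gamma> t)) e \<subseteq> S"
      using S open_contains_ball by blast
    show "\<exists>e>0. \<forall>\<delta>\<in>Gamma T. gdist T \<gamma> \<delta> < e \<longrightarrow> \<delta> \<in> (\<lambda>\<gamma>. temb (\<gamma> t)) -` S \<inter> Gamma T"
    proof (intro exI[of _ e] conjI ballI impI)
      fix \<delta> assume "\<delta> \<in> Gamma T" "gdist T \<gamma> \<delta> < e"
      with e dist_temb_le_gdist[OF t, of \<gamma> \<delta>]
      show "\<delta> \<in> (\<lambda>\<gamma>. temb (\<gamma> t)) -` S \<inter> Gamma T"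
        by auto
    qed (use e in auto)
  qed auto
  moreover have "space M = Gamma T"
    using sets_eq_imp_space_eq[OF M] space_Gamma_borel by simp
  ultimately show "(\<lambda>\<gamma>. temb (\<gamma> t)) -` S \<inter> space M \<in> sets M"
    unfolding M sets_Gamma_borel by auto
qed

lemma measurable_eval:
  assumes M: "sets M = sets (Gamma_borel T)" and t: "t \<in> {0..T}"
  shows "(\<lambda>\<gamma>. \<gamma> t) \<in> M \<rightarrow>\<^sub>M borel"
proof -
  have "(\<lambda>\<gamma>. temb_inv (temb (\<gamma> t))) \<in> M \<rightarrow>\<^sub>M borel"
    using measurable_temb_eval[OF assms] by measurable
  moreover have "temb_inv (temb (\<gamma> t)) = \<gamma> t" if "\<gamma> \<in> space M" for \<gamma>
    using that t sets_eq_imp_space_eq[OF M]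
    by (auto simp: space_Gamma_borel Gamma_def temb_inv_temb)
  ultimately show ?thesis by (simp cong: measurable_cong)
qed

lemma LIMSEQ_floor_mult_div: "(\<lambda>n. of_int \<lfloor>real (Suc n) * t\<rfloor> / real (Suc n)) \<longlonglongrightarrow> t"
proof (rule real_tendsto_sandwich[where f="\<lambda>n. t - 1 / real (Suc n)" and h="\<lambda>n. t"])
  have "t - 1 / real (Suc n) = (real (Suc n) * t - 1) / real (Suc n)" for n
    by (simp add: field_simps)
  then show "\<forall>\<^sub>F n in sequentially. t - 1 / real (Suc n) \<le> of_int \<lfloor>real (Suc n) * t\<rfloor> / real (Suc n)"
    by (intro always_eventually allI) (simp add: divide_right_mono del: of_nat_Suc)
  show "\<forall>\<^sub>F n in sequentially. of_int \<lfloor>real (Suc n) * t\<rfloor> / real (Suc n) \<le> t"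
    by (intro always_eventually allI) (simp add: field_simps del: of_nat_Suc)
  show "(\<lambda>n. t - 1 / real (Suc n)) \<longlonglongrightarrow> t"
    using tendsto_diff[OF tendsto_const[of t] LIMSEQ_inverse_real_of_nat]
    by (simp add: inverse_eq_divide)
qed simp

text \<open>Each curve, clamped to [0,T], is continuous in t, so it is the pointwise limit of its
  evaluations at the grid points \<lfloor>nt\<rfloor>/n; these depend on t only through a countable index.\<close>
lemma measurable_temb_eval_clamp:
  assumes M: "sets M = sets (Gamma_borel T)" and T: "0 \<le> T"
  shows "(\<lambda>p. temb (snd p (clamp 0 T (fst p)))) \<in> borel_measurable (lborel \<Otimes>\<^sub>M M)"
proof -
  have cT: "clamp 0 T s \<in> {0..T}" for s
    using clamp_in_interval[of 0 T s] T by simp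
  define F where "F n p = temb (snd p (clamp 0 T (of_int \<lfloor>real (Suc n) * fst p\<rfloor> / real (Suc n))))"
    for n p
  have "F n \<in> borel_measurable (lborel \<Otimes>\<^sub>M M)" for n
  proof -
    have "(\<lambda>p. temb (snd p (clamp 0 T (of_int i / real (Suc n))))) \<in> borel_measurable (lborel \<Otimes>\<^sub>M M)"
      for i :: int
      using measurable_compose[OF measurable_snd measurable_temb_eval[OF M cT]] by simp
    moreover have "(\<lambda>p. \<lfloor>real (Suc n) * fst p\<rfloor>) \<in> lborel \<Otimes>\<^sub>M M \<rightarrow>\<^sub>M count_space UNIV"
      by measurable
    ultimately show ?thesis
      unfolding F_def by (rule measurable_compose_countable)
  qed
  moreover have "(\<lambda>n. F n p) \<longlonglongrightarrow> temb (snd p (clamp 0 T (fst p)))"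
    if "p \<in> space (lborel \<Otimes>\<^sub>M M)" for p
  proof -
    have "snd p \<in> Gamma T"
      using that sets_eq_imp_space_eq[OF M] by (auto simp: space_pair_measure space_Gamma_borel)
    then have "continuous_on (cbox 0 T) (temb \<circ> snd p)"
      by (simp add: Gamma_def)
    from clamp_continuous_on[OF this, of UNIV]
    have "continuous_on UNIV (\<lambda>s. temb (snd p (clamp 0 T s)))"
      by simp
    from continuous_on_tendsto_compose[OF this LIMSEQ_floor_mult_div] show ?thesis
      by (simp add: F_def)
  qed
  ultimately show ?thesis
    by (rule borel_measurable_LIMSEQ_metric)
qed

subsection \<open>Occupation times and Fubini\<close>

lemma sets_occupation_set:
  assumes M: "sets M = sets (Gamma_borel T)" and T: "0 \<le> T" and [measurable]: "A \<in> sets borel"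
  shows "{p \<in> space (lborel \<Otimes>\<^sub>M M). fst p \<in> {0..T} \<and> snd p (fst p) \<in> A} \<in> sets (lborel \<Otimes>\<^sub>M M)"
proof -
  note [measurable] = measurable_temb_eval_clamp[OF M T]
  have "temb_inv (temb (snd p (clamp 0 T (fst p)))) = snd p (fst p)"
    if "p \<in> space (lborel \<Otimes>\<^sub>M M)" "fst p \<in> {0..T}" for p
    using that sets_eq_imp_space_eq[OF M]
    by (auto simp: space_pair_measure space_Gamma_borel Gamma_def temb_inv_temb)
  then have "{p \<in> space (lborel \<Otimes>\<^sub>M M). fst p \<in> {0..T} \<and> snd p (fst p) \<in> A} =
      {p \<in> space (lborel \<Otimes>\<^sub>M M). fst p \<in> {0..T} \<and> temb_inv (temb (snd p (clamp 0 T (fst p)))) \<in> A}"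
    by auto
  also have "\<dots> \<in> sets (lborel \<Otimes>\<^sub>M M)"
    by measurable
  finally show ?thesis .
qed

lemma emeasure_Gamma_A_eq_0_iff:
  assumes M: "sets M = sets (Gamma_borel T)" "sigma_finite_measure M"
    and T: "0 \<le> T" and A: "A \<in> sets borel"
  shows "emeasure M (Gamma_A T A) = 0 \<longleftrightarrow>
    (AE t in lborel. t \<in> {0..T} \<longrightarrow> emeasure M {\<gamma> \<in> space M. \<gamma> t \<in> A} = 0)"
proof -
  interpret M: sigma_finite_measure M by fact
  interpret pair_sigma_finite lborel M ..
  define Occ where "Occ = {p \<in> space (lborel \<Otimes>\<^sub>M M). fst p \<in> {0..T} \<and> snd p (fst p) \<in> A}"
  have Occ: "Occ \<in> sets (lborel \<Otimes>\<^sub>M M)"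
    unfolding Occ_def using sets_occupation_set[OF M(1) T A] .
  have time_slice: "Pair t -` Occ = (if t \<in> {0..T} then {\<gamma> \<in> space M. \<gamma> t \<in> A} else {})" for t
    by (auto simp: Occ_def space_pair_measure)
  have curve_slice: "(\<lambda>t. (t, \<gamma>)) -` Occ = {t \<in> {0..T}. \<gamma> t \<in> A}" if "\<gamma> \<in> space M" for \<gamma>
    using that by (auto simp: Occ_def space_pair_measure)
  have space_M: "space M = Gamma T"
    using sets_eq_imp_space_eq[OF M(1)] space_Gamma_borel by simp
  have "Gamma_A T A = {\<gamma> \<in> space M. emeasure lborel ((\<lambda>t. (t, \<gamma>)) -` Occ) \<noteq> 0}"
    by (auto simp: Gamma_A_def curve_slice space_M zero_less_iff_neq_zero)
  moreover have "{\<gamma> \<in> space M. emeasure lborel ((\<lambda>t. (t, \<gamma>)) -` Occ) \<noteq> 0} \<in> sets M"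
    using measurable_emeasure_Pair2[OF Occ] by measurable
  ultimately have "emeasure M (Gamma_A T A) = 0 \<longleftrightarrow> (AE \<gamma> in M. emeasure lborel ((\<lambda>t. (t, \<gamma>)) -` Occ) = 0)"
    by (simp add: AE_iff_measurable[OF _ refl])
  also have "\<dots> \<longleftrightarrow> emeasure (lborel \<Otimes>\<^sub>M M) Occ = 0"
    using nn_integral_0_iff_AE[OF measurable_emeasure_Pair2[OF Occ]]
    by (simp add: emeasure_pair_measure_alt2[OF Occ])
  also have "\<dots> \<longleftrightarrow> (AE t in lborel. emeasure M (Pair t -` Occ) = 0)"
    using nn_integral_0_iff_AE[OF measurable_emeasure_Pair1[OF Occ]]
    by (simp add: M.emeasure_pair_measure_alt[OF Occ])
  also have "\<dots> \<longleftrightarrow> (AE t in lborel. t \<in> {0..T} \<longrightarrow> emeasure M {\<gamma> \<in> space M. \<gamma> t \<in> A} = 0)"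
    by (simp add: time_slice)
  finally show ?thesis .
qed

lemma emeasure_density_eq_0_if_null_sets:
  assumes "A \<in> null_sets M"
  shows "emeasure (density M f) A = 0"
proof -
  have "AE x in M. f x * indicator A x = 0"
    using AE_not_in[OF assms] by eventually_elim simp
  then have "(\<integral>\<^sup>+ x. f x * indicator A x \<partial>M) = (\<integral>\<^sup>+ x. 0 \<partial>M)"
    by (rule nn_integral_cong_AE)
  then show ?thesis
    unfolding density_def emeasure_measure_of_conv by simp
qed

text \<open>f need only agree a.e. with a measurable function, as a.e. section of a Lebesgue
  measurable function does.\<close>
lemma emeasure_eq_0_if_density_eq_0:
  fixes f g :: "'a \<Rightarrow> real"
  assumes g: "g \<in> borel_measurable M" and fg: "AE x in M. f x = g x"
    and pos: "AE x in M. x \<in> S \<longrightarrow> 0 < f x"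
    and S: "S \<in> sets M" and A: "A \<in> sets M" "A \<subseteq> S"
    and null: "emeasure (density M (\<lambda>x. indicator S x * ennreal (f x))) A = 0"
  shows "emeasure M A = 0"
proof -
  have "density M (\<lambda>x. indicator S x * ennreal (f x)) = density M (\<lambda>x. indicator S x * ennreal (g x))"
    unfolding density_def using fg
    by (intro arg_cong[where f="measure_of _ _"] ext nn_integral_cong_AE) (auto elim: AE_mp)
  with null A have "A \<in> null_sets (density M (\<lambda>x. indicator S x * ennreal (g x)))"
    by (simp add: null_sets_def)
  with g S have "AE x in M. x \<in> A \<longrightarrow> indicator S x * ennreal (g x) = 0"
    by (simp add: null_sets_density_iff)
  then have "AE x in M. x \<notin> A"
    using fg pos by eventually_elim (use A(2) in \<open>auto simp: indicator_def\<close>)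
  then show ?thesis
    using AE_iff_null_sets[OF A(1)] null_setsD1 by blast
qed

lemma AE_section_borel_measurable:
  fixes f :: "'a::euclidean_space \<times> 'b::euclidean_space \<Rightarrow> real"
  assumes "f \<in> borel_measurable lebesgue"
  shows "AE t in lborel. \<exists>g\<in>borel_measurable lborel. AE x in lborel. f (t, x) = g x"
proof -
  obtain g where g: "g \<in> borel_measurable lborel" and fg: "AE p in lborel. f p = g p"
    using completion_ex_borel_measurable_real[OF assms] by blast
  have "AE p in lborel \<Otimes>\<^sub>M lborel. f p = g p"
    unfolding lborel_prod by (fact fg)
  then have "AE t in lborel. AE x in lborel. f (t, x) = g (t, x)"
    by (rule lborel_pair.AE_pair)
  then show ?thesis
  proof eventually_elim
    case (elim t)
    have "(\<lambda>x. g (t, x)) \<in> borel_measurable lborel"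
      using g by measurable
    with elim show ?case
      by (intro bexI[where x="\<lambda>x. g (t, x)"])
  qed
qed

lemma AE_density_section_null_imp_null:
  fixes \<rho> :: "'a::euclidean_space \<Rightarrow> 'b::euclidean_space \<Rightarrow> real"
  assumes \<rho>: "(\<lambda>p. \<rho> (fst p) (snd p)) \<in> borel_measurable lebesgue"
    and pos: "AE p in lborel. p \<in> I \<times> S \<longrightarrow> 0 < \<rho> (fst p) (snd p)"
    and S: "S \<in> sets borel" and A: "A \<in> sets borel" "A \<subseteq> S"
  shows "AE t in lborel. t \<in> I \<longrightarrow>
    emeasure (density lborel (\<lambda>x. indicator S x * ennreal (\<rho> t x))) A = 0 \<longrightarrow> emeasure lborel A = 0"
proof -
  have "AE p in lborel \<Otimes>\<^sub>M lborel. p \<in> I \<times> S \<longrightarrow> 0 < \<rho> (fst p) (snd p)"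
    unfolding lborel_prod by (fact pos)
  from lborel_pair.AE_pair[OF this]
  have "AE t in lborel. AE x in lborel. (t, x) \<in> I \<times> S \<longrightarrow> 0 < \<rho> t x"
    by simp
  with AE_section_borel_measurable[OF \<rho>] show ?thesis
  proof eventually_elim
    case (elim t)
    then obtain g where g: "g \<in> borel_measurable lborel" and fg: "AE x in lborel. \<rho> t x = g x"
      by auto
    show ?case
    proof (intro impI)
      assume "t \<in> I"
      with elim(2) have "AE x in lborel. x \<in> S \<longrightarrow> 0 < \<rho> t x"
        by (auto elim: AE_mp)
      moreover have "S \<in> sets lborel" "A \<in> sets lborel"
        using S A by simp_all
      ultimately show "emeasure (density lborel (\<lambda>x. indicator S x * ennreal (\<rho> t x))) A = 0 \<Longrightarrow>
          emeasure lborel A = 0"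
        using emeasure_eq_0_if_density_eq_0[OF g fg _ _ _ A(2)] by blast
    qed
  qed
qed

lemma AE_greaterThanLessThan_imp:
  assumes "AE t in lborel. t \<in> {a<..<b} \<longrightarrow> P" and "(a::real) < b"
  shows P
proof (rule ccontr)
  assume "\<not> P"
  with assms(1) have "{a<..<b} \<in> null_sets lborel"
    using AE_iff_null_sets[of "{a<..<b}" lborel] by auto
  with assms(2) show False
    by (auto dest: null_setsD1)
qed

theorem mainTheorem8:
  fixes T :: real
    and b :: "real \<times> real \<Rightarrow> real \<times> real"
    and \<rho> :: "real \<Rightarrow> real \<times> real \<Rightarrow> real"
    and \<eta> :: "(real \<Rightarrow> real \<times> real) measure"
    and A :: "(real \<times> real) set"
  assumes T_pos: "T > 0"
    and b_borel: "b \<in> borel_measurable borel"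
    and b_bounded: "\<exists>M. \<forall>x\<in>torus. norm (b x) \<le> M"
    and b_BV: "BV_torus b"
    and rho_meas: "(\<lambda>p. \<rho> (fst p) (snd p)) \<in> borel_measurable lebesgue"
    and ln_rho_Linf: "\<exists>C. AE p in lborel. p \<in> {0<..<T} \<times> torus \<longrightarrow>
                         \<rho> (fst p) (snd p) > 0 \<and> \<bar>ln (\<rho> (fst p) (snd p))\<bar> \<le> C"
    and cont_eq: "continuity_eq T b \<rho>"
    and eta_sets: "sets \<eta> = sets (Gamma_borel T)"
    and eta_finite: "finite_measure \<eta>"
    and eta_ode: "AE \<gamma> in \<eta>. \<forall>t\<in>{0..T}.
                    \<gamma> t = tproj (\<gamma> 0 + integral {0..t} (\<lambda>\<tau>. b (\<gamma> \<tau>)))"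
    and eta_marg: "\<forall>t\<in>{0..T}. distr \<eta> borel (\<lambda>\<gamma>. \<gamma> t) =
                     density lborel (\<lambda>x. indicator torus x * ennreal (\<rho> t x))"
    and A_sub: "A \<subseteq> torus"
    and A_meas: "A \<in> sets borel"
  shows "emeasure lborel A = 0 \<longleftrightarrow> emeasure \<eta> (Gamma_A T A) = 0"
proof -
  interpret finite_measure \<eta> by fact
  have marginal: "emeasure \<eta> {\<gamma> \<in> space \<eta>. \<gamma> t \<in> A} =
      emeasure (density lborel (\<lambda>x. indicator torus x * ennreal (\<rho> t x))) A" if "t \<in> {0..T}" for t
  proof -
    have "{\<gamma> \<in> space \<eta>. \<gamma> t \<in> A} = (\<lambda>\<gamma>. \<gamma> t) -` A \<inter> space \<eta>"
      by auto
    then show ?thesis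
      using emeasure_distr[OF measurable_eval[OF eta_sets that] A_meas] eta_marg that by simp
  qed
  have occupation: "emeasure \<eta> (Gamma_A T A) = 0 \<longleftrightarrow>
      (AE t in lborel. t \<in> {0..T} \<longrightarrow>
         emeasure (density lborel (\<lambda>x. indicator torus x * ennreal (\<rho> t x))) A = 0)"
    unfolding emeasure_Gamma_A_eq_0_iff[OF eta_sets sigma_finite_measure_axioms less_imp_le[OF T_pos] A_meas]
    by (intro AE_cong) (auto simp: marginal)
  obtain C where "AE p in lborel. p \<in> {0<..<T} \<times> torus \<longrightarrow>
      \<rho> (fst p) (snd p) > 0 \<and> \<bar>ln (\<rho> (fst p) (snd p))\<bar> \<le> C"
    using ln_rho_Linf by blast
  then have "AE p in lborel. p \<in> {0<..<T} \<times> torus \<longrightarrow> 0 < \<rho> (fst p) (snd p)"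
    by eventually_elim auto
  from AE_density_section_null_imp_null[OF rho_meas this torus_sets_borel A_meas A_sub]
  have sections: "AE t in lborel. t \<in> {0<..<T} \<longrightarrow>
      emeasure (density lborel (\<lambda>x. indicator torus x * ennreal (\<rho> t x))) A = 0 \<longrightarrow>
      emeasure lborel A = 0" .
  show ?thesis
  proof
    assume "emeasure lborel A = 0"
    then show "emeasure \<eta> (Gamma_A T A) = 0"
      unfolding occupation using A_meas
      by (auto intro!: emeasure_density_eq_0_if_null_sets simp: null_sets_def)
  next
    assume "emeasure \<eta> (Gamma_A T A) = 0"
    with sections have "AE t in lborel. t \<in> {0<..<T} \<longrightarrow> emeasure lborel A = 0"
      unfolding occupation by eventually_elim auto
    then show "emeasure lborel A = 0"
      using T_pos by (rule AE_greaterThanLessThan_imp)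
  qed
qed

end
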